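(* Let $p \geq 4$ and $q \geq 4$ be integers and let $L$ be the Laplacian of the graph $K_p \oplus C_q$, with eigenvalues $\lambda_1(L) \geq \lambda_2(L) \geq \dots \geq \lambda_{p+q-1}(L)$. Let $\lambda_1(L_{C_q})$ denote the largest eigenvalue of the Laplacian of the path graph on $q-1$ vertices. Then $\lambda_1(L) \in [p,p+2]$; $\lambda_j(L) = p$ for all $j \in \{2,\ldots,p-1\}$; $\lambda_p(L) \in (0, \min\{\lambda_1(L_{C_q})+2,\, p\})$ (an interval contained in $(0,p)$ if $p \geq 6$); and $\lambda_j(L) \in [0,4)$ for all $j \in \{p+1,\ldots,p+q-1\}$.
   Context: For integers $p \geq 3$, $q \geq 2$, the graph $K_p \oplus C_q$ has vertex set $\{-p+1,\ldots,0\} \cup \{1,\ldots,q-1\}$ (so $p+q-1$ vertices). Its edges are: every pair of distinct vertices in $\{-p+1,\ldots,0\}$ (a complete graph on $p$ vertices), the edge $\{0,1\}$, and the edges $\{j,j+1\}$ for $1 \leq j \leq q-2$ (a path on the $q-1$ vertices $1,\ldots,q-1$). The Laplacian $L$ of a graph is the matrix with $L_{ii}$ equal to the degree of vertex $i$, $L_{ij}=-1$ if $i \neq j$ are adjacent and $L_{ij}=0$ otherwise. Eigenvalues of a real symmetric matrix are listed with multiplicity in non-increasing order. *)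

theory Defs
  imports "Jordan_Normal_Form.Char_Poly"
begin

definition graph_laplacian :: "nat \<Rightarrow> (nat \<Rightarrow> nat \<Rightarrow> bool) \<Rightarrow> real mat" where
  "graph_laplacian n adj = mat n n (\<lambda>(i,j).
      if i = j then real (card {k. k < n \<and> k \<noteq> i \<and> adj i k})
      else if adj i j then -1 else 0)"

text \<open>Vertex set of K_p (+) C_q is {-p+1,...,0} union {1,...,q-1}; the matrix
  index i (0 <= i < p+q-1) corresponds to the vertex int i - int p + 1.\<close>
definition KC_vertex :: "nat \<Rightarrow> nat \<Rightarrow> int" where
  "KC_vertex p i = int i - int p + 1"

definition KC_adj_int :: "int \<Rightarrow> int \<Rightarrow> bool" where
  "KC_adj_int a b \<longleftrightarrow> a \<noteq> b \<and>
     ((a \<le> 0 \<and> b \<le> 0) \<or> {a, b} = {0, 1} \<or> (a \<ge> 1 \<and> b \<ge> 1 \<and> \<bar>a - b\<bar> = 1))"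

definition KC_laplacian :: "nat \<Rightarrow> nat \<Rightarrow> real mat" where
  "KC_laplacian p q = graph_laplacian (p + q - 1)
     (\<lambda>i j. KC_adj_int (KC_vertex p i) (KC_vertex p j))"

definition path_laplacian :: "nat \<Rightarrow> real mat" where
  "path_laplacian m = graph_laplacian m (\<lambda>i j. i + 1 = j \<or> j + 1 = i)"

definition eigenvalues_desc :: "real mat \<Rightarrow> real list" where
  "eigenvalues_desc A = (THE xs. sorted_wrt (\<ge>) xs \<and>
      char_poly A = (\<Prod>x\<leftarrow>xs. [:- x, 1:]))"

text \<open>lambda_j(A), 1-based.\<close>
definition eig :: "real mat \<Rightarrow> nat \<Rightarrow> real" where
  "eig A j = eigenvalues_desc A ! (j - 1)"

end

theory Submission
  imports Defs
begin

(* Expanding det (x I - L) along the pendant path gives char_poly L = (x - p)^(p-2) G with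
   G = (x - p) P_q - (p - 1) P_(q-1), where P_n is the characteristic polynomial of the Laplacian
   of the path on n vertices.  The substitution x = 4 sin^2 phi turns the path recurrence
   P_(n+1) = (x - 2) P_n - P_(n-1) into cos phi * P_n(x) = (-1)^(n+1) 2 sin (2 n phi) sin phi, so P_n
   has the roots w_k = 4 sin^2 (k pi / 2n), k < n, and at the roots w_k of P_q one gets
   G(w_k) = (-1)^(q+k) (p - 1) w_k.  These sign changes, together with G(0) = 0, the sign of G'(0)
   and G(p) < 0 < G(p + 2), locate all q + 1 roots of G: 0, one in (0, w_1), q - 2 in
   (w_1, w_(q-1)) and one in (p, p + 2).  All but the last lie in [0, 4). *)

section \<open>Determinants\<close>

lemma det_mat_Suc_eq_except_last_diag:
  fixes f g :: "nat \<times> nat \<Rightarrow> 'a :: comm_ring_1"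
  assumes "\<And>i j. i \<le> n \<Longrightarrow> j \<le> n \<Longrightarrow> (i, j) \<noteq> (n, n) \<Longrightarrow> f (i, j) = g (i, j)"
  shows "det (mat (Suc n) (Suc n) f) =
    det (mat (Suc n) (Suc n) g) + (f (n, n) - g (n, n)) * det (mat n n g)"
proof -
  let ?F = "mat (Suc n) (Suc n) f" and ?G = "mat (Suc n) (Suc n) g"
  have cofactor_eq: "cofactor ?F n j = cofactor ?G n j" if "j < Suc n" for j
    unfolding cofactor_def mat_delete_def using assms that
    by (intro arg_cong2[where f = "(*)"] refl arg_cong[where f = det] eq_matI) auto
  have "mat_delete ?G n n = mat n n g"
    by (rule eq_matI) (auto simp: mat_delete_def)
  then have cofactor_last: "cofactor ?G n n = det (mat n n g)"
    unfolding cofactor_def by (simp flip: mult_2)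
  have "det ?F = (\<Sum>j<Suc n. ?F $$ (n, j) * cofactor ?F n j)"
    by (rule laplace_expansion_row) auto
  also have "\<dots> = (\<Sum>j<Suc n. ?G $$ (n, j) * cofactor ?G n j) + (f (n, n) - g (n, n)) * cofactor ?G n n"
    using cofactor_eq assms by (simp add: algebra_simps lessThan_Suc)
  also have "(\<Sum>j<Suc n. ?G $$ (n, j) * cofactor ?G n j) = det ?G"
    by (rule laplace_expansion_row[symmetric]) auto
  finally show ?thesis
    unfolding cofactor_last .
qed

lemma det_mat_Suc_Suc_tridiagonal_last:
  fixes f :: "nat \<times> nat \<Rightarrow> 'a :: comm_ring_1"
  assumes "\<And>j. j < k \<Longrightarrow> f (Suc k, j) = 0" and "\<And>i. i < k \<Longrightarrow> f (i, Suc k) = 0"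
  shows "det (mat (Suc (Suc k)) (Suc (Suc k)) f) =
    f (Suc k, Suc k) * det (mat (Suc k) (Suc k) f) - f (Suc k, k) * f (k, Suc k) * det (mat k k f)"
proof -
  let ?A = "mat (Suc (Suc k)) (Suc (Suc k)) f"
  define M where "M = mat_delete ?A (Suc k) k"
  have M: "M = mat (Suc k) (Suc k) (\<lambda>(i, j). f (i, if j < k then j else Suc j))"
    unfolding M_def by (rule eq_matI) (auto simp: mat_delete_def)
  have "mat_delete M k k = mat k k f"
    by (rule eq_matI) (auto simp: mat_delete_def M)
  then have "cofactor M k k = det (mat k k f)"
    unfolding cofactor_def by (simp flip: mult_2)
  moreover have "det M = (\<Sum>i<Suc k. M $$ (i, k) * cofactor M i k)"
    by (rule laplace_expansion_column) (auto simp: M)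
  ultimately have det_M: "det M = f (k, Suc k) * det (mat k k f)"
    by (simp add: lessThan_Suc M assms(2))
  have "mat_delete ?A (Suc k) (Suc k) = mat (Suc k) (Suc k) f"
    by (rule eq_matI) (auto simp: mat_delete_def)
  then have cofactor_last: "cofactor ?A (Suc k) (Suc k) = det (mat (Suc k) (Suc k) f)"
    unfolding cofactor_def by (simp flip: power_add mult_2)
  have "cofactor ?A (Suc k) k = - det M"
    unfolding cofactor_def M_def by simp
  moreover have "det ?A = (\<Sum>j<Suc (Suc k). ?A $$ (Suc k, j) * cofactor ?A (Suc k) j)"
    by (rule laplace_expansion_row) auto
  ultimately show ?thesis
    using det_M cofactor_last by (simp add: lessThan_Suc assms(1) algebra_simps)
qed

lemma det_mat_const_plus_diag_but_last:
  fixes a b :: "'a :: comm_ring_1"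
  shows "det (mat (Suc n) (Suc n) (\<lambda>(i, j). if i = j \<and> i < n then a + b else b)) = a ^ n * b"
proof (induction n)
  case 0
  then show ?case by (simp add: det_single)
next
  case (Suc n)
  let ?f = "\<lambda>n (i, j). if i = j \<and> i < n then a + b else b"
  let ?A = "mat (Suc (Suc n)) (Suc (Suc n)) (?f (Suc n))"
  define B where "B = addrow (-1) 0 (Suc n) ?A"
  have "det B = det ?A"
    unfolding B_def by (rule det_addrow) auto
  have B: "B = mat (Suc (Suc n)) (Suc (Suc n))
      (\<lambda>(i, j). if i = 0 then (if j = 0 then a else 0) else ?f (Suc n) (i, j))"
    unfolding B_def by (rule eq_matI) auto
  have "det B = (\<Sum>j<Suc (Suc n). B $$ (0, j) * cofactor B 0 j)"
    by (rule laplace_expansion_row) (auto simp: B)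
  also have "\<dots> = a * cofactor B 0 0"
    by (subst sum.lessThan_Suc_shift) (simp add: B)
  also have "cofactor B 0 0 = det (mat (Suc n) (Suc n) (?f n))"
    unfolding cofactor_def B by (auto simp: mat_delete_def intro!: arg_cong[where f = det] eq_matI)
  finally show ?case using \<open>det B = det ?A\<close> Suc by simp
qed

lemma det_mat_const_plus_diag:
  fixes a b :: "'a :: comm_ring_1"
  shows "det (mat (Suc n) (Suc n) (\<lambda>(i, j). if i = j then a + b else b)) =
    a ^ n * (a + of_nat (Suc n) * b)"
proof (induction n)
  case 0
  then show ?case by (simp add: det_single)
next
  case (Suc n)
  let ?g = "\<lambda>(i, j). if i = j \<and> i < Suc n then a + b else b"
  have "det (mat (Suc (Suc n)) (Suc (Suc n)) (\<lambda>(i, j). if i = j then a + b else b)) =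
      det (mat (Suc (Suc n)) (Suc (Suc n)) ?g) + a * det (mat (Suc n) (Suc n) ?g)"
    by (subst det_mat_Suc_eq_except_last_diag[where g = ?g]) auto
  also have "mat (Suc n) (Suc n) ?g = mat (Suc n) (Suc n) (\<lambda>(i, j). if i = j then a + b else b)"
    by (auto intro: eq_matI)
  finally show ?case
    using Suc det_mat_const_plus_diag_but_last[of "Suc n" a b] by (simp add: algebra_simps)
qed

section \<open>Linear factors and eigenvalue lists\<close>

lemma poly_ext:
  fixes p q :: "'a :: {comm_ring_1, ring_no_zero_divisors, ring_char_0} poly"
  shows "(\<And>x. poly p x = poly q x) \<Longrightarrow> p = q"
  using poly_eq_poly_eq_iff by blast

lemma order_prod_linear_factors:
  fixes a :: "'a :: idom"
  shows "order a (\<Prod>x\<leftarrow>xs. [:-x, 1:]) = count (mset xs) a"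
proof (induction xs)
  case (Cons x xs)
  have "order a [:-x, 1:] = (if x = a then 1 else 0)"
    using order_power_n_n[of a 1] by (auto intro: order_0I)
  moreover have "(\<Prod>x\<leftarrow>xs. [:-x, 1:]) \<noteq> 0"
    by (auto simp: prod_list_zero_iff)
  ultimately show ?case
    using Cons by (simp add: order_mult del: mult_pCons_left)
qed simp

lemma monic_eq_prod_linear_factors:
  fixes f :: "'a :: idom poly"
  assumes "distinct xs" and "\<forall>x\<in>set xs. poly f x = 0"
    and "degree f = length xs" and "lead_coeff f = 1"
  shows "f = (\<Prod>x\<leftarrow>xs. [:-x, 1:])"
  using assms
proof (induction xs arbitrary: f)
  case Nil
  then have "f = [:coeff f 0:]"
    by (metis degree_0_id list.size(3))
  then show ?case
    using Nil by simp
next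
  case (Cons a xs)
  have "[:-a, 1:] dvd f"
    using Cons.prems(2) poly_eq_0_iff_dvd by auto
  then obtain g where f: "f = [:-a, 1:] * g" ..
  have "g \<noteq> 0"
    using f Cons.prems(4) by auto
  then have "degree f = Suc (degree g)"
    unfolding f by (subst degree_mult_eq) auto
  then have "degree g = length xs"
    using Cons.prems(3) by simp
  moreover have "lead_coeff g = 1"
    using Cons.prems(4) f lead_coeff_mult[of "[:-a, 1:]" g] by simp
  moreover have "\<forall>x\<in>set xs. poly g x = 0"
    using Cons.prems(1,2) f by auto
  ultimately show ?case
    using Cons.IH[of g] Cons.prems(1) f by simp
qed

lemma monic_cofactor:
  fixes f g h :: "'a :: idom poly"
  assumes "f = g * h" and "lead_coeff f = 1" and "lead_coeff g = 1"
  shows "lead_coeff h = 1 \<and> degree h = degree f - degree g"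
proof -
  have "g \<noteq> 0" "h \<noteq> 0"
    using assms by auto
  moreover have "lead_coeff f = lead_coeff g * lead_coeff h"
    unfolding assms(1) by (rule lead_coeff_mult)
  ultimately show ?thesis
    using assms by (simp add: degree_mult_eq)
qed

lemma eigenvalues_desc_eqI:
  assumes "sorted_wrt (\<ge>) xs" and "char_poly A = (\<Prod>x\<leftarrow>xs. [:-x, 1:])"
  shows "eigenvalues_desc A = xs"
  unfolding eigenvalues_desc_def
proof (rule the_equality)
  fix ys
  assume ys: "sorted_wrt (\<ge>) ys \<and> char_poly A = (\<Prod>x\<leftarrow>ys. [:-x, 1:])"
  have "mset (rev xs) = mset (rev ys)"
    using ys assms(2) by (auto intro: multiset_eqI simp flip: order_prod_linear_factors)
  moreover have "sorted (rev xs)" "sorted (rev ys)"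
    using ys assms(1) by (simp_all add: sorted_wrt_rev)
  ultimately have "rev ys = rev xs"
    by (metis properties_for_sort sorted_sort_id)
  then show "ys = xs" by simp
qed (use assms in simp)

lemma eig_Cons_replicate_append:
  assumes "eigenvalues_desc A = b # replicate k c @ xs"
  shows "eig A 1 = b"
    and "2 \<le> j \<Longrightarrow> j \<le> k + 1 \<Longrightarrow> eig A j = c"
    and "k + 2 \<le> j \<Longrightarrow> j < k + 2 + length xs \<Longrightarrow> eig A j = xs ! (j - k - 2)"
proof -
  have "eig A j = (replicate k c @ xs) ! (j - 2)" if "2 \<le> j" for j
    using that by (simp add: eig_def assms nth_Cons' numeral_2_eq_2)
  then show "2 \<le> j \<Longrightarrow> j \<le> k + 1 \<Longrightarrow> eig A j = c"
    and "k + 2 \<le> j \<Longrightarrow> j < k + 2 + length xs \<Longrightarrow> eig A j = xs ! (j - k - 2)"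
    by (auto simp: nth_append)
qed (simp add: eig_def assms)

lemma sorted_wrt_greater_imp_distinct:
  fixes xs :: "'a :: linorder list"
  shows "sorted_wrt (>) xs \<Longrightarrow> distinct xs"
  by (metis distinct_rev sorted_wrt_rev strict_sorted_iff)

lemma poly_roots_between_sign_changes:
  fixes f :: "real poly" and s :: "nat \<Rightarrow> real"
  assumes mono: "\<And>i j. a \<le> i \<Longrightarrow> i < j \<Longrightarrow> j \<le> b \<Longrightarrow> s i < s j"
    and sign_change: "\<And>k. a \<le> k \<Longrightarrow> k < b \<Longrightarrow> poly f (s k) * poly f (s (Suc k)) < 0"
  obtains xs where "length xs = b - a" and "sorted_wrt (>) xs"
    and "\<forall>x\<in>set xs. s a < x \<and> x < s b \<and> poly f x = 0"
proof -
  have "\<forall>k\<in>{a..<b}. \<exists>x. s k < x \<and> x < s (Suc k) \<and> poly f x = 0"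
    using poly_IVT sign_change mono by (metis Suc_leI atLeastLessThan_iff lessI)
  then obtain c where c: "\<And>k. k \<in> {a..<b} \<Longrightarrow> s k < c k \<and> c k < s (Suc k) \<and> poly f (c k) = 0"
    by metis
  have s_le: "s i \<le> s j" if "a \<le> i" "i \<le> j" "j \<le> b" for i j
    using mono[of i j] that by (cases "i = j") auto
  show thesis
  proof
    show "length (map c (rev [a..<b])) = b - a" by simp
    show "sorted_wrt (>) (map c (rev [a..<b]))"
      unfolding sorted_wrt_map sorted_wrt_rev
    proof (rule sorted_wrt_mono_rel[OF _ sorted_wrt_upt])
      fix i j assume "i \<in> set [a..<b]" "j \<in> set [a..<b]" "i < j"
      then show "c i < c j"
        using c[of i] c[of j] s_le[of "Suc i" j] by force
    qed
    show "\<forall>x\<in>set (map c (rev [a..<b])). s a < x \<and> x < s b \<and> poly f x = 0"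
    proof
      fix x assume "x \<in> set (map c (rev [a..<b]))"
      then obtain k where "k \<in> {a..<b}" "x = c k" by auto
      then show "s a < x \<and> x < s b \<and> poly f x = 0"
        using c[of k] s_le[of a k] s_le[of "Suc k" b] by auto
    qed
  qed
qed

section \<open>The path Laplacian\<close>

fun path_poly :: "nat \<Rightarrow> real poly" where
  "path_poly 0 = 1"
| "path_poly (Suc 0) = [:-1, 1:]"
| "path_poly (Suc (Suc n)) = [:-2, 1:] * path_poly (Suc n) - path_poly n"

(* x I - L for the one-sided infinite path 0, 1, 2, ...; its leading n x n block differs from
   char_poly_matrix (path_laplacian n) only in the last diagonal entry. *)
definition path_char_matrix :: "nat \<times> nat \<Rightarrow> real poly" where
  "path_char_matrix = (\<lambda>(i, j).
     if i = j then [:- (if i = 0 then 1 else 2), 1:]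
     else if i + 1 = j \<or> j + 1 = i then 1 else 0)"

lemma det_path_char_matrix: "det (mat k k path_char_matrix) = path_poly k"
proof (induction k rule: path_poly.induct)
  case 2
  then show ?case by (simp add: det_single path_char_matrix_def)
next
  case (3 n)
  have "det (mat (Suc (Suc n)) (Suc (Suc n)) path_char_matrix) =
    path_char_matrix (Suc n, Suc n) * det (mat (Suc n) (Suc n) path_char_matrix)
    - path_char_matrix (Suc n, n) * path_char_matrix (n, Suc n) * det (mat n n path_char_matrix)"
    by (rule det_mat_Suc_Suc_tridiagonal_last) (auto simp: path_char_matrix_def)
  then show ?case
    using 3 by (simp add: path_char_matrix_def)
qed simp

lemma card_path_neighbours:
  fixes i n :: nat
  assumes "i < n" and "2 \<le> n"
  shows "card {k. k < n \<and> k \<noteq> i \<and> (i + 1 = k \<or> k + 1 = i)} = (if i = 0 \<or> i = n - 1 then 1 else 2)"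
proof -
  consider "i = 0" | "i = n - 1" "i \<noteq> 0" | "0 < i" "i < n - 1"
    using assms by linarith
  then show ?thesis
  proof cases
    case 1
    then have "{k. k < n \<and> k \<noteq> i \<and> (i + 1 = k \<or> k + 1 = i)} = {1}"
      using assms by auto
    then show ?thesis using 1 by simp
  next
    case 2
    then have "{k. k < n \<and> k \<noteq> i \<and> (i + 1 = k \<or> k + 1 = i)} = {i - 1}"
      using assms by auto
    then show ?thesis using 2 by simp
  next
    case 3
    then have "{k. k < n \<and> k \<noteq> i \<and> (i + 1 = k \<or> k + 1 = i)} = {i - 1, i + 1}"
      using assms by auto
    then show ?thesis using 3 by simp
  qed
qed

lemma char_poly_path_laplacian:
  assumes "2 \<le> n"
  shows "char_poly (path_laplacian n) = path_poly n + path_poly (n - 1)"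
proof -
  obtain m where n: "n = Suc m"
    using assms by (cases n) auto
  let ?C = "\<lambda>(i, j). if i = j \<and> i = m then [:-1, 1:] else path_char_matrix (i, j)"
  have "char_poly_matrix (path_laplacian n) = mat (Suc m) (Suc m) ?C"
    using assms card_path_neighbours[OF _ assms]
    by (intro eq_matI) (auto simp: n char_poly_matrix_def path_laplacian_def graph_laplacian_def
        path_char_matrix_def one_pCons)
  then have "char_poly (path_laplacian n) = det (mat (Suc m) (Suc m) ?C)"
    by (simp add: char_poly_def)
  also have "\<dots> = det (mat (Suc m) (Suc m) path_char_matrix)
      + ([:-1, 1:] - path_char_matrix (m, m)) * det (mat m m path_char_matrix)"
    by (subst det_mat_Suc_eq_except_last_diag[where g = path_char_matrix]) auto
  also have "path_char_matrix (m, m) = [:-2, 1:]"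
    using assms by (simp add: n path_char_matrix_def)
  finally show ?thesis
    by (simp add: n det_path_char_matrix)
qed

lemma path_poly_cos:
  fixes \<phi> :: real
  shows "cos \<phi> * poly (path_poly k) (4 * sin \<phi> ^ 2) = (-1) ^ k * cos ((2 * real k + 1) * \<phi>)"
proof (induction k rule: path_poly.induct)
  case 2
  have "cos \<phi> * poly (path_poly 1) (4 * sin \<phi> ^ 2) = cos \<phi> * (4 * (1 - cos \<phi> ^ 2) - 1)"
    by (simp add: sin_squared_eq)
  also have "\<dots> = - cos (3 * \<phi>)"
    using cos_treble_cos[of \<phi>] by (simp add: power3_eq_cube power2_eq_square algebra_simps)
  finally show ?case
    by simp
next
  case (3 n)
  let ?x = "4 * sin \<phi> ^ 2"
  define A where "A = (2 * real n + 3) * \<phi>"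
  have "(2 * real (Suc (Suc n)) + 1) * \<phi> = A + 2 * \<phi>"
    and "(2 * real (Suc n) + 1) * \<phi> = A" and "(2 * real n + 1) * \<phi> = A - 2 * \<phi>"
    by (simp_all add: A_def algebra_simps)
  note angles = this
  have "cos (A + 2 * \<phi>) + cos (A - 2 * \<phi>) = 2 * cos A * cos (2 * \<phi>)"
    by (simp add: cos_add cos_diff)
  also have "\<dots> = (2 - ?x) * cos A"
    unfolding cos_double_sin by (simp add: algebra_simps)
  finally have recurrence: "(2 - ?x) * cos A - cos (A - 2 * \<phi>) = cos (A + 2 * \<phi>)"
    by simp
  have "cos \<phi> * poly (path_poly (Suc (Suc n))) ?x =
      (?x - 2) * (cos \<phi> * poly (path_poly (Suc n)) ?x) - cos \<phi> * poly (path_poly n) ?x"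
    by (simp add: algebra_simps)
  also have "\<dots> = (-1) ^ n * ((2 - ?x) * cos A - cos (A - 2 * \<phi>))"
    using 3 unfolding angles by (simp add: algebra_simps)
  finally show ?case
    unfolding angles recurrence by simp
qed simp

lemma char_poly_path_laplacian_sin:
  fixes \<phi> :: real
  assumes "2 \<le> n"
  shows "cos \<phi> * poly (char_poly (path_laplacian n)) (4 * sin \<phi> ^ 2) =
    (-1) ^ Suc n * (2 * sin (2 * real n * \<phi>) * sin \<phi>)"
proof -
  obtain m where n: "n = Suc m"
    using assms by (cases n) auto
  define A where "A = 2 * real n * \<phi>"
  have Y_n: "cos \<phi> * poly (path_poly n) (4 * sin \<phi> ^ 2) = (-1) ^ n * cos (A + \<phi>)"
    using path_poly_cos[of \<phi> n] by (simp add: A_def algebra_simps)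
  have Y_m: "cos \<phi> * poly (path_poly m) (4 * sin \<phi> ^ 2) = - ((-1) ^ n * cos (A - \<phi>))"
    using path_poly_cos[of \<phi> m] by (simp add: A_def n algebra_simps)
  have "cos \<phi> * poly (char_poly (path_laplacian n)) (4 * sin \<phi> ^ 2) =
      cos \<phi> * poly (path_poly n) (4 * sin \<phi> ^ 2) + cos \<phi> * poly (path_poly m) (4 * sin \<phi> ^ 2)"
    using char_poly_path_laplacian[OF assms] by (simp add: n distrib_left)
  also have "\<dots> = (-1) ^ n * (cos (A + \<phi>) - cos (A - \<phi>))"
    unfolding Y_n Y_m by (simp add: algebra_simps)
  also have "cos (A + \<phi>) - cos (A - \<phi>) = - (2 * sin A * sin \<phi>)"
    by (simp add: cos_add cos_diff)
  finally show ?thesis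
    by (simp add: A_def)
qed

definition path_eigenvalue :: "nat \<Rightarrow> nat \<Rightarrow> real" where
  "path_eigenvalue n k = 4 * sin (real k * pi / (2 * real n)) ^ 2"

lemma path_angle_le_pi_half:
  assumes "k \<le> n"
  shows "real k * pi / (2 * real n) \<le> pi / 2"
proof -
  have "real k * pi / (2 * real n) = real k / real n * (pi / 2)"
    by simp
  also have "\<dots> \<le> 1 * (pi / 2)"
    using assms by (intro mult_right_mono) (auto simp: divide_le_eq_1)
  finally show ?thesis by simp
qed

lemma cos_path_angle_pos:
  assumes "k < n"
  shows "0 < cos (real k * pi / (2 * real n))"
proof (rule cos_gt_zero_pi)
  have "real k * pi < real n * pi"
    using assms by (intro mult_strict_right_mono) auto
  then show "real k * pi / (2 * real n) < pi / 2"
    using assms by (simp add: field_simps)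
qed (auto intro: order.strict_trans2[of _ 0])

lemma path_eigenvalue_strict_mono:
  assumes "i < j" and "j \<le> n"
  shows "path_eigenvalue n i < path_eigenvalue n j"
proof -
  let ?a = "real i * pi / (2 * real n)" and ?b = "real j * pi / (2 * real n)"
  have a: "0 \<le> ?a" and b: "?b \<le> pi / 2"
    using path_angle_le_pi_half[OF assms(2)] by simp_all
  have ab: "?a < ?b"
    using assms by (intro divide_strict_right_mono mult_strict_right_mono) auto
  have "sin ?a < sin ?b"
    by (rule sin_monotone_2pi) (use a b ab pi_gt_zero in linarith)+
  moreover have "0 \<le> sin ?a"
    by (rule sin_ge_zero) (use a b ab pi_gt_zero in linarith)+
  ultimately show ?thesis
    unfolding path_eigenvalue_def by (simp add: power_strict_mono)
qed

lemma path_eigenvalue_0 [simp]: "path_eigenvalue n 0 = 0"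
  by (simp add: path_eigenvalue_def)

lemma path_eigenvalue_self: "0 < n \<Longrightarrow> path_eigenvalue n n = 4"
  by (simp add: path_eigenvalue_def)

lemma path_eigenvalue_less_4: "k < n \<Longrightarrow> path_eigenvalue n k < 4"
  using path_eigenvalue_strict_mono[of k n n] by (simp add: path_eigenvalue_self)

lemma path_eigenvalue_pos: "0 < k \<Longrightarrow> k \<le> n \<Longrightarrow> 0 < path_eigenvalue n k"
  using path_eigenvalue_strict_mono[of 0 k n] by simp

lemma poly_char_poly_path_laplacian_eigenvalue:
  assumes "2 \<le> n" and "k < n"
  shows "poly (char_poly (path_laplacian n)) (path_eigenvalue n k) = 0"
proof -
  define \<phi> where "\<phi> = real k * pi / (2 * real n)"
  have "2 * real n * \<phi> = real k * pi"
    using assms by (simp add: \<phi>_def)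
  then have "cos \<phi> * poly (char_poly (path_laplacian n)) (path_eigenvalue n k) = 0"
    using char_poly_path_laplacian_sin[OF assms(1), of \<phi>] by (simp add: path_eigenvalue_def \<phi>_def)
  moreover have "0 < cos \<phi>"
    unfolding \<phi>_def using assms(2) by (rule cos_path_angle_pos)
  ultimately show ?thesis by simp
qed

lemma poly_char_poly_path_laplacian_interlace:
  assumes "2 \<le> n" and "k \<le> n"
  shows "poly (char_poly (path_laplacian n)) (path_eigenvalue (Suc n) k) =
    (-1) ^ (n + k) * path_eigenvalue (Suc n) k"
proof -
  define \<phi> where "\<phi> = real k * pi / (2 * real (Suc n))"
  have eigenvalue: "path_eigenvalue (Suc n) k = 4 * sin \<phi> ^ 2"
    by (simp add: path_eigenvalue_def \<phi>_def)
  have "2 * real n * \<phi> = real k * pi - 2 * \<phi>"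
    by (simp add: \<phi>_def field_simps)
  then have sin_eq: "sin (2 * real n * \<phi>) = (-1) ^ Suc k * (2 * sin \<phi> * cos \<phi>)"
    by (simp add: sin_diff sin_double)
  have "cos \<phi> * poly (char_poly (path_laplacian n)) (4 * sin \<phi> ^ 2) =
      (-1) ^ Suc n * (2 * sin (2 * real n * \<phi>) * sin \<phi>)"
    by (rule char_poly_path_laplacian_sin[OF assms(1)])
  also have "\<dots> = cos \<phi> * ((-1) ^ (n + k) * (4 * sin \<phi> ^ 2))"
    unfolding sin_eq by (simp add: power_add power2_eq_square algebra_simps)
  finally have "cos \<phi> * poly (char_poly (path_laplacian n)) (4 * sin \<phi> ^ 2) =
      cos \<phi> * ((-1) ^ (n + k) * (4 * sin \<phi> ^ 2))" .
  moreover have "0 < cos \<phi>"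
    unfolding \<phi>_def using assms(2) by (intro cos_path_angle_pos) simp
  ultimately show ?thesis
    unfolding eigenvalue by simp
qed

lemma eigenvalues_desc_path_laplacian:
  assumes "2 \<le> n"
  shows "eigenvalues_desc (path_laplacian n) = map (path_eigenvalue n) (rev [0..<n])"
proof (rule eigenvalues_desc_eqI)
  let ?zs = "map (path_eigenvalue n) (rev [0..<n])"
  have sorted: "sorted_wrt (>) ?zs"
    unfolding sorted_wrt_map sorted_wrt_rev
    by (rule sorted_wrt_mono_rel[OF _ sorted_wrt_upt]) (auto intro: path_eigenvalue_strict_mono)
  then show "sorted_wrt (\<ge>) ?zs"
    by (rule sorted_wrt_mono_rel[rotated]) auto
  have "path_laplacian n \<in> carrier_mat n n"
    by (simp add: path_laplacian_def graph_laplacian_def)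
  from degree_monic_char_poly[OF this]
  show "char_poly (path_laplacian n) = (\<Prod>x\<leftarrow>?zs. [:-x, 1:])"
    using sorted_wrt_greater_imp_distinct[OF sorted] poly_char_poly_path_laplacian_eigenvalue[OF assms]
    by (intro monic_eq_prod_linear_factors) auto
qed

lemma eig_path_laplacian_1_gt_2:
  assumes "3 \<le> n"
  shows "2 < eig (path_laplacian n) 1"
proof -
  define \<theta> where "\<theta> = real (n - 1) * pi / (2 * real n)"
  have "eig (path_laplacian n) 1 = 4 * sin \<theta> ^ 2"
    using assms eigenvalues_desc_path_laplacian[of n]
    by (cases n) (simp_all add: eig_def path_eigenvalue_def \<theta>_def)
  moreover have "sin (pi / 4) < sin \<theta>"
  proof (rule sin_monotone_2pi)
    have "real n * pi < 2 * real (n - 1) * pi"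
      using assms by (intro mult_strict_right_mono) auto
    then show "pi / 4 < \<theta>"
      using assms by (simp add: \<theta>_def field_simps)
    show "\<theta> \<le> pi / 2"
      unfolding \<theta>_def by (rule path_angle_le_pi_half) simp
  qed simp
  then have "(sqrt 2 / 2) ^ 2 < sin \<theta> ^ 2"
    unfolding sin_45 by (intro power_strict_mono) auto
  ultimately show ?thesis
    by (simp add: power_divide)
qed

lemma poly_path_poly_0: "poly (path_poly k) 0 = (-1) ^ k"
  by (induction k rule: path_poly.induct) auto

lemma poly_pderiv_path_poly_0:
  "poly (pderiv (path_poly k)) 0 = (-1) ^ Suc k * (real k * (real k + 1) / 2)"
proof (induction k rule: path_poly.induct)
  case (3 n)
  have "poly (pderiv (path_poly (Suc (Suc n)))) 0 =
      poly (path_poly (Suc n)) 0 - 2 * poly (pderiv (path_poly (Suc n))) 0 - poly (pderiv (path_poly n)) 0"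
    by (simp add: pderiv_mult pderiv_diff pderiv_pCons pderiv_smult)
  then show ?case
    using 3 by (simp add: poly_path_poly_0 field_simps)
qed (simp_all add: pderiv_pCons)

lemma poly_char_poly_path_laplacian_0:
  "2 \<le> n \<Longrightarrow> poly (char_poly (path_laplacian n)) 0 = 0"
  by (cases n) (simp_all add: char_poly_path_laplacian poly_path_poly_0)

lemma poly_pderiv_char_poly_path_laplacian_0:
  assumes "2 \<le> n"
  shows "poly (pderiv (char_poly (path_laplacian n))) 0 = (-1) ^ Suc n * real n"
proof -
  obtain m where n: "n = Suc m"
    using assms by (cases n) auto
  have "char_poly (path_laplacian n) = path_poly (Suc m) + path_poly m"
    using char_poly_path_laplacian[OF assms] by (simp add: n)
  then show ?thesis
    by (simp add: n pderiv_add poly_pderiv_path_poly_0 field_simps)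
qed

lemma poly_path_poly_mono:
  fixes y :: real
  assumes "4 \<le> y"
  shows "0 < poly (path_poly k) y \<and> poly (path_poly k) y \<le> poly (path_poly (Suc k)) y"
proof (induction k)
  case (Suc k)
  have "2 * poly (path_poly (Suc k)) y \<le> (y - 2) * poly (path_poly (Suc k)) y"
    using Suc assms by (intro mult_right_mono) auto
  moreover have "poly (path_poly (Suc (Suc k))) y =
      (y - 2) * poly (path_poly (Suc k)) y - poly (path_poly k) y"
    by (simp add: algebra_simps)
  ultimately show ?case
    using Suc by linarith
qed (use assms in simp)

section \<open>The Laplacian of K_p with a pendant path\<close>

lemma KC_adj_int_KC_vertex:
  "KC_adj_int (KC_vertex p i) (KC_vertex p j) \<longleftrightarrow>
     i \<noteq> j \<and> (i < p \<and> j < p \<or> i + 1 = j \<and> p \<le> j \<or> j + 1 = i \<and> p \<le> i)"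
  unfolding KC_adj_int_def KC_vertex_def doubleton_eq_iff by auto

lemma card_KC_neighbours:
  fixes p m i :: nat
  assumes "2 \<le> p" and "2 \<le> m" and "i < p + m"
  shows "card {k. k < p + m \<and> k \<noteq> i \<and> KC_adj_int (KC_vertex p i) (KC_vertex p k)} =
    (if i < p - 1 then p - 1 else if i = p - 1 then p else if i = p + m - 1 then 1 else 2)"
proof -
  let ?N = "{k. k < p + m \<and> k \<noteq> i \<and> KC_adj_int (KC_vertex p i) (KC_vertex p k)}"
  consider "i < p - 1" | "i = p - 1" | "i = p + m - 1" | "p \<le> i" "i < p + m - 1"
    using assms by linarith
  then show ?thesis
  proof cases
    case 1
    then have "?N = {..<p} - {i}"
      using assms by (auto simp: KC_adj_int_KC_vertex)
    then show ?thesis using 1 by simp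
  next
    case 2
    then have "?N = insert p ({..<p} - {i})"
      using assms by (auto simp: KC_adj_int_KC_vertex)
    then show ?thesis using 2 assms by simp
  next
    case 3
    then have "?N = {i - 1}"
      using assms by (auto simp: KC_adj_int_KC_vertex)
    moreover have "\<not> i < p - 1" "i \<noteq> p - 1"
      using 3 assms by linarith+
    ultimately show ?thesis using 3 by simp
  next
    case 4
    then have "?N = {i - 1, i + 1}"
      using assms by (auto simp: KC_adj_int_KC_vertex)
    moreover have "\<not> i < p - 1" "i \<noteq> p - 1" "i \<noteq> p + m - 1"
      using 4 assms by linarith+
    ultimately show ?thesis by simp
  qed
qed

(* x I - L for K_p with a one-sided infinite path attached at vertex 0 (index p - 1); its leading
   (p + q - 1)-block differs from char_poly_matrix (KC_laplacian p q) only in the last diagonal entry. *)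
definition clique_path_char_matrix :: "nat \<Rightarrow> nat \<times> nat \<Rightarrow> real poly" where
  "clique_path_char_matrix p = (\<lambda>(i, j).
     if i = j then [:- real (if i < p - 1 then p - 1 else if i = p - 1 then p else 2), 1:]
     else if KC_adj_int (KC_vertex p i) (KC_vertex p j) then 1 else 0)"

lemma det_clique_path_char_matrix_minus_one:
  assumes "2 \<le> p"
  shows "det (mat (p - 1) (p - 1) (clique_path_char_matrix p)) = [:- real p, 1:] ^ (p - 2) * [:-1, 1:]"
proof -
  have "mat (p - 1) (p - 1) (clique_path_char_matrix p) =
      mat (Suc (p - 2)) (Suc (p - 2)) (\<lambda>(i, j). if i = j then [:- real p, 1:] + 1 else 1)"
    using assms by (intro eq_matI)
      (auto simp: clique_path_char_matrix_def KC_adj_int_KC_vertex one_pCons of_nat_diff)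
  then show ?thesis
    using assms by (simp add: det_mat_const_plus_diag of_nat_poly of_nat_diff)
qed

lemma det_clique_path_char_matrix_base:
  assumes "2 \<le> p"
  shows "det (mat p p (clique_path_char_matrix p)) =
    [:- real p, 1:] ^ (p - 2) * ([:- real p, 1:] * [:-1, 1:] - [:real p - 1:])"
proof -
  define n where "n = p - 2"
  have p: "p = Suc (Suc n)"
    using assms by (simp add: n_def)
  let ?a = "[:- real p, 1:]"
  let ?J = "\<lambda>(i, j). if i = j then ?a + 1 else 1"
  have "det (mat (Suc (Suc n)) (Suc (Suc n)) (clique_path_char_matrix p)) =
      det (mat (Suc (Suc n)) (Suc (Suc n)) ?J) + (?a - (?a + 1)) * det (mat (Suc n) (Suc n) ?J)"
    by (subst det_mat_Suc_eq_except_last_diag[where g = ?J])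
      (auto simp: p clique_path_char_matrix_def KC_adj_int_KC_vertex one_pCons)
  also have "\<dots> = ?a ^ Suc n * (?a + of_nat (Suc (Suc n))) - ?a ^ n * (?a + of_nat (Suc n))"
    by (simp only: det_mat_const_plus_diag) simp
  also have "\<dots> = ?a ^ n * (?a * [:-1, 1:] - [:real p - 1:])"
    by (rule poly_ext) (simp add: p algebra_simps)
  finally show ?thesis
    by (simp add: p)
qed

lemma det_clique_path_char_matrix_tail:
  assumes "2 \<le> p" and "p - 1 \<le> k"
  shows "det (mat (Suc (Suc k)) (Suc (Suc k)) (clique_path_char_matrix p)) =
    [:-2, 1:] * det (mat (Suc k) (Suc k) (clique_path_char_matrix p))
    - det (mat k k (clique_path_char_matrix p))"
proof -
  let ?C = "clique_path_char_matrix p"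
  have "det (mat (Suc (Suc k)) (Suc (Suc k)) ?C) =
      ?C (Suc k, Suc k) * det (mat (Suc k) (Suc k) ?C) - ?C (Suc k, k) * ?C (k, Suc k) * det (mat k k ?C)"
    using assms by (intro det_mat_Suc_Suc_tridiagonal_last)
      (auto simp: clique_path_char_matrix_def KC_adj_int_KC_vertex)
  moreover have "?C (Suc k, Suc k) = [:-2, 1:]" and "?C (Suc k, k) = 1" and "?C (k, Suc k) = 1"
    using assms by (auto simp: clique_path_char_matrix_def KC_adj_int_KC_vertex)
  ultimately show ?thesis
    by simp
qed

lemma det_clique_path_char_matrix:
  assumes "2 \<le> p"
  shows "det (mat (p + k) (p + k) (clique_path_char_matrix p)) =
    [:- real p, 1:] ^ (p - 2) * ([:- real p, 1:] * path_poly (Suc k) - [:real p - 1:] * path_poly k)"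
proof (induction k rule: induct_nat_012)
  case 0
  show ?case
    using det_clique_path_char_matrix_base[OF assms] by simp
next
  case 1
  let ?a = "[:- real p, 1:]"
  have "p + Suc 0 = Suc (Suc (p - 1))" and "p = Suc (p - 1)"
    using assms by simp_all
  then have "det (mat (p + Suc 0) (p + Suc 0) (clique_path_char_matrix p)) =
      [:-2, 1:] * det (mat p p (clique_path_char_matrix p)) - det (mat (p - 1) (p - 1) (clique_path_char_matrix p))"
    using det_clique_path_char_matrix_tail[OF assms, of "p - 1"] by simp
  also have "\<dots> = [:-2, 1:] * (?a ^ (p - 2) * (?a * [:-1, 1:] - [:real p - 1:])) - ?a ^ (p - 2) * [:-1, 1:]"
    unfolding det_clique_path_char_matrix_base[OF assms] det_clique_path_char_matrix_minus_one[OF assms] ..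
  also have "\<dots> = ?a ^ (p - 2) * (?a * path_poly 2 - [:real p - 1:] * path_poly 1)"
    by (rule poly_ext) (simp add: numeral_2_eq_2 algebra_simps)
  finally show ?case
    by (simp add: numeral_2_eq_2)
next
  case (ge2 k)
  let ?a = "[:- real p, 1:]" and ?D = "\<lambda>n. det (mat n n (clique_path_char_matrix p))"
  have "?D (p + Suc (Suc k)) = [:-2, 1:] * ?D (p + Suc k) - ?D (p + k)"
    using det_clique_path_char_matrix_tail[OF assms, of "p + k"] by simp
  also have "\<dots> = [:-2, 1:] * (?a ^ (p - 2) * (?a * path_poly (Suc (Suc k)) - [:real p - 1:] * path_poly (Suc k)))
      - ?a ^ (p - 2) * (?a * path_poly (Suc k) - [:real p - 1:] * path_poly k)"
    unfolding ge2 ..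
  also have "\<dots> = ?a ^ (p - 2) * (?a * path_poly (Suc (Suc (Suc k))) - [:real p - 1:] * path_poly (Suc (Suc k)))"
    by (rule poly_ext) (simp add: algebra_simps)
  finally show ?case .
qed

lemma char_poly_matrix_KC_laplacian:
  assumes "2 \<le> p" and "2 \<le> m"
  shows "char_poly_matrix (KC_laplacian p (Suc m)) = mat (p + m) (p + m)
    (\<lambda>(i, j). if i = j \<and> i = p + m - 1 then [:-1, 1:] else clique_path_char_matrix p (i, j))"
    (is "_ = mat _ _ ?C")
proof (rule eq_matI)
  fix i j
  assume "i < dim_row (mat (p + m) (p + m) ?C)" and "j < dim_col (mat (p + m) (p + m) ?C)"
  then have ij: "i < p + m" "j < p + m"
    by simp_all
  have entry: "char_poly_matrix (KC_laplacian p (Suc m)) $$ (i, j) =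
      (if i = j then [:0, 1:] else 0) - [:KC_laplacian p (Suc m) $$ (i, j):]"
    using ij by (simp add: char_poly_matrix_def KC_laplacian_def graph_laplacian_def)
  show "char_poly_matrix (KC_laplacian p (Suc m)) $$ (i, j) = mat (p + m) (p + m) ?C $$ (i, j)"
  proof (cases "i = j")
    case True
    then show ?thesis
      unfolding entry using ij assms card_KC_neighbours[OF assms ij(1)]
      by (auto simp: KC_laplacian_def graph_laplacian_def clique_path_char_matrix_def of_nat_diff)
  next
    case False
    then show ?thesis
      unfolding entry using ij
      by (auto simp: KC_laplacian_def graph_laplacian_def clique_path_char_matrix_def one_pCons)
  qed
qed (simp_all add: char_poly_matrix_def KC_laplacian_def graph_laplacian_def)

definition KC_poly :: "nat \<Rightarrow> nat \<Rightarrow> real poly" where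
  "KC_poly p q = [:- real p, 1:] * char_poly (path_laplacian q)
     - [:real p - 1:] * char_poly (path_laplacian (q - 1))"

lemma char_poly_KC_laplacian:
  assumes "2 \<le> p" and "3 \<le> q"
  shows "char_poly (KC_laplacian p q) = [:- real p, 1:] ^ (p - 2) * KC_poly p q"
proof -
  define m where "m = q - 2"
  have q: "q = Suc (Suc m)" and "2 \<le> Suc m"
    using assms(2) by (simp_all add: m_def)
  let ?a = "[:- real p, 1:]" and ?c = "[:real p - 1:]"
  let ?C = "clique_path_char_matrix p"
  have "char_poly (KC_laplacian p q) = det (mat (Suc (p + m)) (Suc (p + m))
      (\<lambda>(i, j). if i = j \<and> i = p + m then [:-1, 1:] else ?C (i, j)))"
    using char_poly_matrix_KC_laplacian[OF assms(1) \<open>2 \<le> Suc m\<close>] by (simp add: char_poly_def q)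
  also have "\<dots> = det (mat (p + Suc m) (p + Suc m) ?C) + ([:-1, 1:] - ?C (p + m, p + m)) * det (mat (p + m) (p + m) ?C)"
    by (subst det_mat_Suc_eq_except_last_diag[where g = ?C]) auto
  also have "?C (p + m, p + m) = [:-2, 1:]"
    using assms(1) \<open>2 \<le> Suc m\<close> by (auto simp: clique_path_char_matrix_def)
  also have "det (mat (p + Suc m) (p + Suc m) ?C) + ([:-1, 1:] - [:-2, 1:]) * det (mat (p + m) (p + m) ?C) =
      ?a ^ (p - 2) * (?a * (path_poly (Suc (Suc m)) + path_poly (Suc m)) - ?c * (path_poly (Suc m) + path_poly m))"
    unfolding det_clique_path_char_matrix[OF assms(1)] by (simp add: smult_add_right algebra_simps)
  also have "\<dots> = ?a ^ (p - 2) * KC_poly p q"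
    using char_poly_path_laplacian[of q] char_poly_path_laplacian[of "Suc m"] \<open>2 \<le> Suc m\<close>
    by (simp add: KC_poly_def q)
  finally show ?thesis .
qed

lemma KC_poly_monic:
  assumes "2 \<le> p" and "3 \<le> q"
  shows "lead_coeff (KC_poly p q) = 1 \<and> degree (KC_poly p q) = Suc q"
proof -
  have "KC_laplacian p q \<in> carrier_mat (p + q - 1) (p + q - 1)"
    by (simp add: KC_laplacian_def graph_laplacian_def)
  from degree_monic_char_poly[OF this]
  have "lead_coeff (char_poly (KC_laplacian p q)) = 1" and "degree (char_poly (KC_laplacian p q)) = p + q - 1"
    by simp_all
  moreover have "lead_coeff ([:- real p, 1:] ^ (p - 2)) = 1"
    by (simp only: lead_coeff_power) simp
  moreover have "degree ([:- real p, 1:] ^ (p - 2)) = p - 2"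
    by (simp add: degree_linear_power)
  ultimately have "lead_coeff (KC_poly p q) = 1" and "degree (KC_poly p q) = p + q - 1 - (p - 2)"
    using monic_cofactor[OF char_poly_KC_laplacian[OF assms]] by auto
  moreover have "p + q - 1 - (p - 2) = Suc q"
    using assms by simp
  ultimately show ?thesis
    by simp
qed

lemma poly_KC_poly_0: "3 \<le> q \<Longrightarrow> poly (KC_poly p q) 0 = 0"
  by (simp add: KC_poly_def poly_char_poly_path_laplacian_0)

lemma poly_pderiv_KC_poly_0:
  assumes "3 \<le> q"
  shows "poly (pderiv (KC_poly p q)) 0 = (-1) ^ q * (real p + real q - 1)"
proof -
  obtain m where q: "q = Suc m" and "2 \<le> m"
    using assms by (cases q) auto
  show ?thesis
    using poly_pderiv_char_poly_path_laplacian_0[of q] poly_pderiv_char_poly_path_laplacian_0[of m]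
      poly_char_poly_path_laplacian_0[of q] assms \<open>2 \<le> m\<close>
    by (simp add: KC_poly_def q pderiv_diff pderiv_add pderiv_mult pderiv_smult pderiv_pCons algebra_simps)
qed

lemma poly_KC_poly_path_eigenvalue:
  assumes "3 \<le> q" and "k < q"
  shows "poly (KC_poly p q) (path_eigenvalue q k) = (-1) ^ (q + k) * (real p - 1) * path_eigenvalue q k"
proof -
  obtain m where q: "q = Suc m" and "2 \<le> m"
    using assms by (cases q) auto
  show ?thesis
    using poly_char_poly_path_laplacian_eigenvalue[of q k] poly_char_poly_path_laplacian_interlace[of m k]
      assms \<open>2 \<le> m\<close>
    by (simp add: KC_poly_def q)
qed

lemma poly_KC_poly_at_p:
  assumes "4 \<le> p" and "3 \<le> q"
  shows "poly (KC_poly p q) (real p) < 0"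
proof -
  define n where "n = q - 2"
  have q: "q = Suc (Suc n)"
    using assms(2) by (simp add: n_def)
  have "0 < poly (char_poly (path_laplacian (q - 1))) (real p)"
    using poly_path_poly_mono[of "real p" n] poly_path_poly_mono[of "real p" "Suc n"] assms
      char_poly_path_laplacian[of "q - 1"]
    by (simp add: q)
  then show ?thesis
    using assms by (simp add: KC_poly_def)
qed

lemma poly_KC_poly_at_p_plus_2:
  assumes "2 \<le> p" and "3 \<le> q"
  shows "0 < poly (KC_poly p q) (real p + 2)"
proof -
  define n where "n = q - 2"
  have q: "q = Suc (Suc n)"
    using assms(2) by (simp add: n_def)
  let ?y = "real p + 2"
  let ?Y = "\<lambda>k. poly (path_poly k) ?y"
  have Y: "0 < ?Y n" "?Y n \<le> ?Y (Suc n)"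
    using poly_path_poly_mono[of ?y n] assms by simp_all
  have P: "char_poly (path_laplacian q) = path_poly (Suc (Suc n)) + path_poly (Suc n)"
    "char_poly (path_laplacian (q - 1)) = path_poly (Suc n) + path_poly n"
    using char_poly_path_laplacian[of q] char_poly_path_laplacian[of "q - 1"] assms by (simp_all add: q)
  have "poly (KC_poly p q) ?y = (real p + 3) * ?Y (Suc n) - (real p + 1) * ?Y n"
    unfolding KC_poly_def P by (simp add: algebra_simps)
  moreover have "(real p + 1) * ?Y n \<le> (real p + 1) * ?Y (Suc n)"
    using Y by (intro mult_left_mono) auto
  ultimately show ?thesis
    using Y by (simp add: algebra_simps)
qed

lemma KC_poly_root_small:
  assumes "2 \<le> p" and "3 \<le> q"
  obtains r where "0 < r" and "r < path_eigenvalue q 1" and "poly (KC_poly p q) r = 0"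
proof -
  let ?G = "KC_poly p q" and ?w = "path_eigenvalue q 1"
  have "[:- 0, 1:] dvd ?G"
    using poly_KC_poly_0[OF assms(2)] by (simp only: poly_eq_0_iff_dvd)
  then obtain H where G: "?G = [:0, 1:] * H"
    by auto
  have "poly H 0 = poly (pderiv ?G) 0"
    by (simp add: G pderiv_mult pderiv_pCons)
  then have H_0: "poly H 0 = (-1) ^ q * (real p + real q - 1)"
    using poly_pderiv_KC_poly_0[OF assms(2)] by simp
  have w: "0 < ?w"
    using assms by (simp add: path_eigenvalue_pos)
  have "poly H ?w = poly ?G ?w / ?w"
    using w by (simp add: G)
  also have "\<dots> = (-1) ^ Suc q * (real p - 1)"
    using w assms by (simp add: poly_KC_poly_path_eigenvalue)
  finally have H_w: "poly H ?w = (-1) ^ Suc q * (real p - 1)" .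
  have "poly H 0 * poly H ?w = - ((real p + real q - 1) * (real p - 1))"
    unfolding H_0 H_w by (simp flip: power_add add: power_mult)
  also have "\<dots> < 0"
    using assms by (intro neg_less_0_iff_less[THEN iffD2] mult_pos_pos) auto
  finally obtain r where "0 < r" "r < ?w" "poly H r = 0"
    using poly_IVT[OF w] by blast
  then show thesis
    using that by (simp add: G)
qed

lemma KC_poly_roots_middle:
  assumes "2 \<le> p" and "3 \<le> q"
  obtains xs where "length xs = q - 2" and "sorted_wrt (>) xs"
    and "\<forall>x\<in>set xs. path_eigenvalue q 1 < x \<and> x < path_eigenvalue q (q - 1) \<and> poly (KC_poly p q) x = 0"
proof (rule poly_roots_between_sign_changes[of 1 "q - 1" "path_eigenvalue q" "KC_poly p q"])
  show "path_eigenvalue q i < path_eigenvalue q j" if "1 \<le> i" "i < j" "j \<le> q - 1" for i j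
    using that by (intro path_eigenvalue_strict_mono) auto
  show "poly (KC_poly p q) (path_eigenvalue q k) * poly (KC_poly p q) (path_eigenvalue q (Suc k)) < 0"
    if "1 \<le> k" "k < q - 1" for k
  proof -
    have "0 < path_eigenvalue q k" and "0 < path_eigenvalue q (Suc k)"
      using that by (simp_all add: path_eigenvalue_pos)
    then have "0 < (real p - 1) ^ 2 * (path_eigenvalue q k * path_eigenvalue q (Suc k))"
      using assms by simp
    moreover have "poly (KC_poly p q) (path_eigenvalue q k) * poly (KC_poly p q) (path_eigenvalue q (Suc k)) =
        ((-1) ^ (q + k) * (-1) ^ (q + Suc k)) * ((real p - 1) ^ 2 * (path_eigenvalue q k * path_eigenvalue q (Suc k)))"
      using that assms by (simp add: poly_KC_poly_path_eigenvalue power2_eq_square mult_ac)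
    moreover have "(-1::real) ^ (q + k) * (-1) ^ (q + Suc k) = -1"
      by (simp flip: power_add add: power_mult)
    ultimately show ?thesis
      by simp
  qed
qed (rule that; simp add: numeral_2_eq_2)

lemma KC_poly_root_large:
  assumes "4 \<le> p" and "3 \<le> q"
  obtains b where "real p < b" and "b < real p + 2" and "poly (KC_poly p q) b = 0"
  using poly_IVT_pos[of "real p" "real p + 2" "KC_poly p q"] assms
    poly_KC_poly_at_p poly_KC_poly_at_p_plus_2 that by auto

lemma KC_poly_factorization:
  assumes "4 \<le> p" and "3 \<le> q"
  obtains b xs where "KC_poly p q = (\<Prod>x\<leftarrow>b # xs. [:-x, 1:])"
    and "real p < b" and "b < real p + 2" and "length xs = q" and "sorted_wrt (>) xs"
    and "\<forall>x\<in>set xs. 0 \<le> x \<and> x < 4" and "0 < xs ! 0"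
proof -
  have "2 \<le> p"
    using assms by simp
  obtain r where r: "0 < r" "r < path_eigenvalue q 1" "poly (KC_poly p q) r = 0"
    using KC_poly_root_small[OF \<open>2 \<le> p\<close> assms(2)] .
  obtain ys where ys: "length ys = q - 2" "sorted_wrt (>) ys"
    "\<forall>y\<in>set ys. path_eigenvalue q 1 < y \<and> y < path_eigenvalue q (q - 1) \<and> poly (KC_poly p q) y = 0"
    using KC_poly_roots_middle[OF \<open>2 \<le> p\<close> assms(2)] .
  obtain b where b: "real p < b" "b < real p + 2" "poly (KC_poly p q) b = 0"
    using KC_poly_root_large[OF assms] .
  have w_1: "path_eigenvalue q 1 < 4" and w_max: "path_eigenvalue q (q - 1) < 4"
    using assms by (simp_all add: path_eigenvalue_less_4)
  let ?xs = "ys @ [r, 0]"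
  have "\<forall>y\<in>set ys. 0 < y \<and> y < 4"
  proof
    fix y assume "y \<in> set ys"
    then have "path_eigenvalue q 1 < y" and "y < path_eigenvalue q (q - 1)"
      using ys(3) by auto
    then show "0 < y \<and> y < 4"
      using r w_max by linarith
  qed
  then have bounds: "\<forall>x\<in>set ?xs. 0 \<le> x \<and> x < 4"
    using r w_1 by auto
  have sorted: "sorted_wrt (>) (b # ?xs)"
    using ys r b bounds w_max assms by (fastforce simp: sorted_wrt_append)
  have factorization: "KC_poly p q = (\<Prod>x\<leftarrow>b # ?xs. [:-x, 1:])"
    using KC_poly_monic[OF \<open>2 \<le> p\<close> assms(2)] sorted_wrt_greater_imp_distinct[OF sorted] ys(1) assms
      ys(3) r(3) b(3) poly_KC_poly_0[OF assms(2)]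
    by (intro monic_eq_prod_linear_factors) auto
  have "length ?xs = q" and "sorted_wrt (>) ?xs"
    using ys(1) sorted assms by simp_all
  moreover have "0 < ?xs ! 0"
    using ys(1,3) r assms by (cases ys) auto
  ultimately show thesis
    using that[OF factorization b(1,2)] bounds by blast
qed

lemma eigenvalues_desc_KC_laplacian:
  assumes "4 \<le> p" and "3 \<le> q"
  obtains b xs where "eigenvalues_desc (KC_laplacian p q) = b # replicate (p - 2) (real p) @ xs"
    and "real p < b" and "b < real p + 2" and "length xs = q"
    and "\<forall>x\<in>set xs. 0 \<le> x \<and> x < 4" and "0 < xs ! 0"
proof -
  obtain b xs where G: "KC_poly p q = (\<Prod>x\<leftarrow>b # xs. [:-x, 1:])"
    and b: "real p < b" "b < real p + 2" and xs: "length xs = q" "sorted_wrt (>) xs"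
    "\<forall>x\<in>set xs. 0 \<le> x \<and> x < 4" "0 < xs ! 0"
    using KC_poly_factorization[OF assms] .
  have "char_poly (KC_laplacian p q) = (\<Prod>x\<leftarrow>b # replicate (p - 2) (real p) @ xs. [:-x, 1:])"
    using char_poly_KC_laplacian[of p q] assms unfolding G by (simp add: ac_simps del: mult_pCons_left)
  moreover have "sorted_wrt (\<ge>) (b # replicate (p - 2) (real p) @ xs)"
  proof -
    have "sorted_wrt (\<ge>) xs"
      by (rule sorted_wrt_mono_rel[OF _ xs(2)]) auto
    moreover have "sorted_wrt (\<ge>) (replicate (p - 2) (real p))"
      by (simp add: sorted_wrt_iff_nth_less)
    moreover have "4 \<le> real p"
      using assms by simp
    ultimately show ?thesis
      using xs(3) b by (auto simp: sorted_wrt_append)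
  qed
  ultimately have "eigenvalues_desc (KC_laplacian p q) = b # replicate (p - 2) (real p) @ xs"
    by (intro eigenvalues_desc_eqI)
  then show thesis
    using that b xs by blast
qed

theorem lemma1:
  fixes p q :: nat
  assumes "p \<ge> 4" and "q \<ge> 4"
  defines "L \<equiv> KC_laplacian p q"
  shows "(p \<le> eig L 1 \<and> eig L 1 \<le> real p + 2)
    \<and> (\<forall>j \<in> {2..p-1}. eig L j = real p)
    \<and> (0 < eig L p \<and> eig L p < min (eig (path_laplacian (q - 1)) 1 + 2) (real p))
    \<and> (\<forall>j \<in> {p+1..p+q-1}. 0 \<le> eig L j \<and> eig L j < 4)"
proof -
  obtain b xs where ev: "eigenvalues_desc L = b # replicate (p - 2) (real p) @ xs"
    and b: "real p < b" "b < real p + 2" and xs: "length xs = q"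
    "\<forall>x\<in>set xs. 0 \<le> x \<and> x < 4" "0 < xs ! 0"
    using eigenvalues_desc_KC_laplacian[of p q] assms unfolding L_def by auto
  note eig = eig_Cons_replicate_append[OF ev]
  have "\<forall>j \<in> {2..p-1}. eig L j = real p"
    using eig(2) assms(1) by auto
  moreover have "eig L p = xs ! 0" and "xs ! 0 \<in> set xs"
    using eig(3)[of p] xs(1) assms by auto
  moreover have "eig L j \<in> set xs" if "j \<in> {p+1..p+q-1}" for j
    using eig(3)[of j] that xs(1) assms by auto
  moreover have "2 < eig (path_laplacian (q - 1)) 1"
    using assms(2) by (intro eig_path_laplacian_1_gt_2) simp
  moreover have "4 \<le> real p"
    using assms by simp
  ultimately show ?thesis
    using eig(1) b xs(2,3) by fastforce
qed

end
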